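(* Let $(\sigma_n)_{n=1}^\infty$ be a strictly increasing sequence of positive integers with $\sigma_{n+1}\ge\sigma_n+n$ for all $n\ge1$ and $\lim_{n\to\infty}\frac{\sigma_{n+1}-\sigma_n}{n}=\beta$ for some real $\beta\ge1$. Let \[G((\sigma_n)_{n=1}^\infty)=\{x\in J\colon a_{\sigma_n}(x),\ldots,a_{\sigma_n+n-1}(x)\ \text{is an arithmetic progression for all sufficiently large}\ n\}.\] Then $\dim_{\rm H} G((\sigma_n)_{n=1}^\infty)\le\frac{\beta-1}{2\beta}$.
   Context: Every irrational $x\in(0,1)$ has a regular continued fraction expansion with partial quotients $a_n(x)\in\mathbb N$, $n\ge1$. $J=\{x\in(0,1)\setminus\mathbb Q\colon a_n(x)<a_{n+1}(x)\text{ for every }n\ge1\}$. $\dim_{\rm H}$ denotes Hausdorff dimension in $[0,1]$. *)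

theory Defs
  imports "HOL-Analysis.Analysis"
begin

definition gauss_map :: "real \<Rightarrow> real" where
  "gauss_map x = (if x = 0 then 0 else frac (1 / x))"

definition cf_quot :: "real \<Rightarrow> nat \<Rightarrow> nat" where
  "cf_quot x n = nat \<lfloor>1 / ((gauss_map ^^ (n - 1)) x)\<rfloor>"

definition J_set :: "real set" where
  "J_set = {x. 0 < x \<and> x < 1 \<and> x \<notin> \<rat> \<and> (\<forall>n\<ge>1. cf_quot x n < cf_quot x (Suc n))}"

definition arith_prog :: "(nat \<Rightarrow> nat) \<Rightarrow> nat \<Rightarrow> nat \<Rightarrow> bool" where
  "arith_prog f m n \<longleftrightarrow> (\<exists>d::int. \<forall>i<n. int (f (m + i)) = int (f m) + int i * d)"

definition hausdorff_pre :: "real \<Rightarrow> real \<Rightarrow> real set \<Rightarrow> ennreal" where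
  "hausdorff_pre s \<delta> E =
     (INF U \<in> {U :: nat \<Rightarrow> real set. E \<subseteq> (\<Union>i. U i) \<and>
                 (\<forall>i. bounded (U i) \<and> diameter (U i) \<le> \<delta>)}.
        \<Sum>i. ennreal (diameter (U i) powr s))"

definition hausdorff_measure :: "real \<Rightarrow> real set \<Rightarrow> ennreal" where
  "hausdorff_measure s E = (SUP \<delta> \<in> {0<..}. hausdorff_pre s \<delta> E)"

definition hausdorff_dim :: "real set \<Rightarrow> ereal" where
  "hausdorff_dim E = Inf {ereal s | s. 0 \<le> s \<and> hausdorff_measure s E = 0}"

definition G_set :: "(nat \<Rightarrow> nat) \<Rightarrow> real set" where
  "G_set \<sigma> = {x \<in> J_set. \<forall>\<^sub>F n in sequentially. arith_prog (cf_quot x) (\<sigma> n) n}"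

end

theory Submission
  imports Defs
begin

text \<open>Fix \<open>s\<close> with \<open>(\<beta> - 1) / (2 \<beta>) < s < 1/2\<close>; we show that the \<open>s\<close>-dimensional Hausdorff
  pre-measure of \<open>G\<close> vanishes at every scale. \<open>G\<close> is the countable union of the sets \<open>G\<^sub>N\<close> on which
  every block \<open>m \<ge> N\<close> is an arithmetic progression. A cylinder fixing digits \<open>a\<^sub>1 < \<dots> < a\<^sub>k\<close>
  has diameter at most \<open>(a\<^sub>1 \<cdots> a\<^sub>k)\<^sup>-\<^sup>2\<close>, and we bound the pre-measure of the rank \<open>k\<close> cylinders
  of \<open>G\<^sub>N\<close> by \<open>C (a\<^sub>1 \<cdots> a\<^sub>k)\<^sup>-\<^sup>2\<^sup>s a\<^sub>k\<^sup>-\<^sup>g\<close>, moving such a bound from deep cylinders back to rank 1.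
  A free digit costs \<open>\<Sum>\<^bsub>a > a\<^sub>k\<^esub> a\<^sup>-\<^sup>2\<^sup>s\<^sup>-\<^sup>g \<approx> a\<^sub>k\<^sup>1\<^sup>-\<^sup>2\<^sup>s\<^sup>-\<^sup>g\<close>, i.e. it lowers \<open>g\<close> by \<open>1 - 2 s\<close>, whereas a
  block of length \<open>m\<close> is determined by two digits and raises \<open>g\<close> by about \<open>2 s m\<close>. Between blocks
  \<open>m\<close> and \<open>m + 1\<close> there are about \<open>(\<beta> - 1) m\<close> free digits, so the gains win exactly when
  \<open>s > (\<beta> - 1) / (2 \<beta>)\<close>; starting at a late block \<open>n\<close> then makes the constant \<open>C\<close> tend to \<open>0\<close>.\<close>

section \<open>The Hausdorff pre-measure\<close>

lemma hausdorff_pre_mono: "E \<subseteq> F \<Longrightarrow> hausdorff_pre s \<delta> E \<le> hausdorff_pre s \<delta> F"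
  unfolding hausdorff_pre_def by (rule INF_superset_mono) auto

lemma hausdorff_pre_le_diameter_powr:
  assumes "bounded S" "diameter S \<le> \<delta>" "0 \<le> \<delta>"
  shows "hausdorff_pre s \<delta> S \<le> ennreal (diameter S powr s)"
proof -
  let ?U = "\<lambda>i::nat. if i = 0 then S else {}"
  have "hausdorff_pre s \<delta> S \<le> (\<Sum>i. ennreal (diameter (?U i) powr s))"
    unfolding hausdorff_pre_def using assms by (intro INF_lower) auto
  also have "\<dots> = (\<Sum>i<1. ennreal (diameter (?U i) powr s))"
    by (rule suminf_finite) auto
  finally show ?thesis by simp
qed

lemma hausdorff_pre_empty: "0 \<le> \<delta> \<Longrightarrow> hausdorff_pre s \<delta> {} = 0"
  using hausdorff_pre_le_diameter_powr[of "{}" \<delta> s] by simp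

lemma hausdorff_pre_approx_cover:
  assumes "hausdorff_pre s \<delta> E < top" "0 < e"
  obtains U where "E \<subseteq> (\<Union>l. U l)" "\<And>l. bounded (U l) \<and> diameter (U l) \<le> \<delta>"
    "(\<Sum>l. ennreal (diameter (U l) powr s)) < hausdorff_pre s \<delta> E + ennreal e"
proof -
  have lt: "hausdorff_pre s \<delta> E + 0 < hausdorff_pre s \<delta> E + ennreal e"
    using assms by (subst ennreal_add_left_cancel_less) auto
  have "(INF U \<in> {U. E \<subseteq> (\<Union>l. U l) \<and> (\<forall>l. bounded (U l) \<and> diameter (U l) \<le> \<delta>)}.
      \<Sum>l. ennreal (diameter (U l) powr s)) = hausdorff_pre s \<delta> E"
    by (simp only: hausdorff_pre_def)
  with lt have "(INF U \<in> {U. E \<subseteq> (\<Union>l. U l) \<and> (\<forall>l. bounded (U l) \<and> diameter (U l) \<le> \<delta>)}.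
      \<Sum>l. ennreal (diameter (U l) powr s)) < hausdorff_pre s \<delta> E + ennreal e"
    by (simp only: add_0_right)
  then show ?thesis
    unfolding INF_less_iff using that by blast
qed

lemma hausdorff_pre_UN_le:
  "hausdorff_pre s \<delta> (\<Union>i. E i) \<le> (\<Sum>i. hausdorff_pre s \<delta> (E i))"
proof (rule ennreal_le_epsilon)
  fix e :: real
  assume fin: "(\<Sum>i. hausdorff_pre s \<delta> (E i)) < top" and e: "0 < e"
  define cost where "cost U = (\<Sum>l. ennreal (diameter (U l) powr s))" for U :: "nat \<Rightarrow> real set"
  have "\<exists>U. E i \<subseteq> (\<Union>l. U l) \<and> (\<forall>l. bounded (U l) \<and> diameter (U l) \<le> \<delta>) \<and>
      cost U < hausdorff_pre s \<delta> (E i) + ennreal (e * (1/2)^Suc i)" for i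
  proof -
    have "0 < e * (1/2)^Suc i"
      using e by simp
    then obtain U where "E i \<subseteq> (\<Union>l. U l)" "\<And>l. bounded (U l) \<and> diameter (U l) \<le> \<delta>"
      "cost U < hausdorff_pre s \<delta> (E i) + ennreal (e * (1/2)^Suc i)"
      using hausdorff_pre_approx_cover[OF ennreal_suminf_lessD[OF fin, of i]] unfolding cost_def by blast
    then show ?thesis
      by blast
  qed
  then obtain V where "\<forall>i. E i \<subseteq> (\<Union>l. V i l) \<and> (\<forall>l. bounded (V i l) \<and> diameter (V i l) \<le> \<delta>) \<and>
      cost (V i) < hausdorff_pre s \<delta> (E i) + ennreal (e * (1/2)^Suc i)"
    using choice[where Q = "\<lambda>i U. E i \<subseteq> (\<Union>l. U l) \<and> (\<forall>l. bounded (U l) \<and> diameter (U l) \<le> \<delta>) \<and>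
      cost U < hausdorff_pre s \<delta> (E i) + ennreal (e * (1/2)^Suc i)"] by blast
  then have V: "\<And>i. E i \<subseteq> (\<Union>l. V i l)" "\<And>i l. bounded (V i l) \<and> diameter (V i l) \<le> \<delta>"
    and cost_V: "\<And>i. cost (V i) < hausdorff_pre s \<delta> (E i) + ennreal (e * (1/2)^Suc i)"
    by blast+
  define W where "W j = V (fst (prod_decode j)) (snd (prod_decode j))" for j
  have "(\<Union>i. E i) \<subseteq> (\<Union>j. W j)"
  proof
    fix x assume "x \<in> (\<Union>i. E i)"
    then obtain i l where "x \<in> V i l"
      using V(1) by blast
    then have "x \<in> W (prod_encode (i, l))"
      by (simp add: W_def)
    then show "x \<in> (\<Union>j. W j)"
      by blast
  qed
  then have "hausdorff_pre s \<delta> (\<Union>i. E i) \<le> cost W"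
    unfolding hausdorff_pre_def cost_def using V(2) by (intro INF_lower) (auto simp: W_def)
  also have "\<dots> = (\<Sum>i. cost (V i))"
    unfolding cost_def W_def
    by (rule suminf_ennreal_2dimen[where f = "\<lambda>p. ennreal (diameter (V (fst p) (snd p)) powr s)"]) simp
  also have "\<dots> \<le> (\<Sum>i. hausdorff_pre s \<delta> (E i) + ennreal (e * (1/2)^Suc i))"
    by (intro suminf_le less_imp_le cost_V summableI)
  also have "\<dots> = (\<Sum>i. hausdorff_pre s \<delta> (E i)) + (\<Sum>i. ennreal (e * (1/2)^Suc i))"
    by (rule suminf_add[symmetric]) auto
  also have "(\<Sum>i. ennreal (e * (1/2)^Suc i)) = ennreal e"
    using sums_mult[OF power_half_series, of e] e by (subst suminf_ennreal2) (auto simp: sums_iff)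
  finally show "hausdorff_pre s \<delta> (\<Union>i. E i) \<le> (\<Sum>i. hausdorff_pre s \<delta> (E i)) + ennreal e" .
qed

lemma hausdorff_measure_eq_0I:
  "(\<And>\<delta>. 0 < \<delta> \<Longrightarrow> hausdorff_pre s \<delta> E = 0) \<Longrightarrow> hausdorff_measure s E = 0"
  unfolding hausdorff_measure_def by simp

lemma hausdorff_dim_le:
  assumes "0 \<le> t" "t < b" "\<And>s. t < s \<Longrightarrow> s < b \<Longrightarrow> hausdorff_measure s E = 0"
  shows "hausdorff_dim E \<le> ereal t"
  unfolding hausdorff_dim_def
proof (rule dense_ge_bounded[of "ereal t" "ereal b"])
  fix w assume w: "ereal t < w" "w < ereal b"
  then obtain r where "w = ereal r" "t < r" "r < b"
    by (cases w) auto
  then show "Inf {ereal s |s. 0 \<le> s \<and> hausdorff_measure s E = 0} \<le> w"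
    using assms by (intro Inf_lower) auto
qed (use assms in simp)

section \<open>Continued fraction digits\<close>

definition unit_irrationals :: "real set" where
  "unit_irrationals = {x. 0 < x \<and> x < 1 \<and> x \<notin> \<rat>}"

lemma gauss_map_unit_irrationals:
  assumes "x \<in> unit_irrationals"
  shows "gauss_map x \<in> unit_irrationals"
proof -
  have x: "0 < x" "x \<notin> \<rat>"
    using assms by (auto simp: unit_irrationals_def)
  have "1 / x \<notin> \<rat>"
    using x Rats_divide[OF Rats_1, of "1 / x"] by auto
  have "frac (1 / x) \<notin> \<rat>"
  proof
    assume "frac (1 / x) \<in> \<rat>"
    then have "frac (1 / x) + of_int \<lfloor>1 / x\<rfloor> \<in> \<rat>"
      by simp
    with \<open>1 / x \<notin> \<rat>\<close> show False
      by (simp add: frac_def)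
  qed
  moreover from this have "frac (1 / x) \<noteq> 0"
    by (metis Rats_0)
  ultimately show ?thesis
    using x frac_lt_1[of "1 / x"] frac_ge_0[of "1 / x"]
    by (auto simp: unit_irrationals_def gauss_map_def)
qed

lemma funpow_gauss_map_unit_irrationals:
  "x \<in> unit_irrationals \<Longrightarrow> (gauss_map ^^ n) x \<in> unit_irrationals"
  by (induction n) (auto simp: gauss_map_unit_irrationals)

lemma J_set_subset_unit_irrationals: "J_set \<subseteq> unit_irrationals"
  by (auto simp: J_set_def unit_irrationals_def)

lemma cf_quot_Suc_gauss_map: "1 \<le> n \<Longrightarrow> cf_quot x (Suc n) = cf_quot (gauss_map x) n"
  by (cases n) (simp_all add: cf_quot_def funpow_Suc_right del: funpow.simps)

lemma floor_inverse_ge_1: "y \<in> unit_irrationals \<Longrightarrow> 1 \<le> nat \<lfloor>1 / y\<rfloor>"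
  by (simp add: unit_irrationals_def le_nat_iff)

lemma cf_quot_ge_1: "x \<in> unit_irrationals \<Longrightarrow> 1 \<le> cf_quot x n"
  unfolding cf_quot_def by (intro floor_inverse_ge_1 funpow_gauss_map_unit_irrationals)

lemma cf_quot_1_gauss_map:
  assumes "x \<in> unit_irrationals"
  shows "x = 1 / (real (cf_quot x 1) + gauss_map x)"
proof -
  have "0 < x"
    using assms by (auto simp: unit_irrationals_def)
  moreover have "real (cf_quot x 1) = of_int \<lfloor>1 / x\<rfloor>"
    using floor_inverse_ge_1[OF assms] by (simp add: cf_quot_def)
  ultimately show ?thesis
    by (simp add: gauss_map_def frac_def)
qed

text \<open>Undoing a Gauss step, \<open>x = 1 / (a + T x)\<close>, divides distances by at least \<open>a\<^sup>2\<close>.\<close>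

lemma cf_cylinder_dist:
  assumes "x \<in> unit_irrationals" "y \<in> unit_irrationals" "\<forall>i\<in>{1..k}. cf_quot x i = cf_quot y i"
  shows "\<bar>x - y\<bar> \<le> 1 / (\<Prod>i<k. real (cf_quot x (Suc i)))\<^sup>2"
  using assms
proof (induction k arbitrary: x y)
  case 0
  then show ?case
    by (auto simp: unit_irrationals_def)
next
  case (Suc k)
  define a where "a = real (cf_quot x 1)"
  define u v where "u = gauss_map x" and "v = gauss_map y"
  define P where "P = (\<Prod>i<k. real (cf_quot u (Suc i)))"
  have a: "1 \<le> a" "cf_quot y 1 = cf_quot x 1"
    using cf_quot_ge_1[OF Suc.prems(1), of 1] Suc.prems(3) by (simp_all add: a_def)
  have uv: "u \<in> unit_irrationals" "v \<in> unit_irrationals"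
    using Suc.prems gauss_map_unit_irrationals by (auto simp: u_def v_def)
  then have "0 \<le> u" "0 \<le> v"
    by (auto simp: unit_irrationals_def)
  have "\<forall>i\<in>{1..k}. cf_quot u i = cf_quot v i"
    using Suc.prems(3) by (auto simp: u_def v_def cf_quot_Suc_gauss_map[symmetric])
  then have IH: "\<bar>u - v\<bar> \<le> 1 / P\<^sup>2"
    unfolding P_def by (rule Suc.IH[OF uv])
  have xy: "x = 1 / (a + u)" "y = 1 / (a + v)"
    using cf_quot_1_gauss_map[OF Suc.prems(1)] cf_quot_1_gauss_map[OF Suc.prems(2)]
    unfolding u_def v_def a_def by (simp_all only: a(2))
  have "0 < a + u" "0 < a + v"
    using a \<open>0 \<le> u\<close> \<open>0 \<le> v\<close> by auto
  then have "x - y = (v - u) / ((a + u) * (a + v))"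
    unfolding xy by (simp add: field_simps)
  then have "\<bar>x - y\<bar> = \<bar>u - v\<bar> / ((a + u) * (a + v))"
    using \<open>0 < a + u\<close> \<open>0 < a + v\<close> by (simp add: abs_divide abs_mult abs_minus_commute)
  also have "\<dots> \<le> \<bar>u - v\<bar> / (a * a)"
    using a \<open>0 \<le> u\<close> \<open>0 \<le> v\<close> by (intro divide_left_mono mult_mono) auto
  also have "\<dots> \<le> (1 / P\<^sup>2) / (a * a)"
    using IH a by (intro divide_right_mono) auto
  also have "\<dots> = 1 / (a * P)\<^sup>2"
    by (simp add: power2_eq_square)
  also have "a * P = (\<Prod>i<Suc k. real (cf_quot x (Suc i)))"
    unfolding prod.lessThan_Suc_shift a_def P_def u_def by (simp add: cf_quot_Suc_gauss_map)
  finally show ?case .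
qed

lemma J_set_cf_quot_less: "x \<in> J_set \<Longrightarrow> 1 \<le> i \<Longrightarrow> cf_quot x i < cf_quot x (Suc i)"
  by (simp add: J_set_def)

lemma J_set_cf_quot_ge: "x \<in> J_set \<Longrightarrow> i \<le> cf_quot x i"
proof (induction i)
  case (Suc i)
  then show ?case
    using cf_quot_ge_1[of x "Suc 0"] J_set_subset_unit_irrationals J_set_cf_quot_less[of x i]
    by (cases "i = 0") force+
qed simp

lemma arith_prog_eq:
  assumes "arith_prog f p m" "2 \<le> m" "f p \<le> f (Suc p)" "j < m"
  shows "f (p + j) = f p + j * (f (Suc p) - f p)"
proof -
  obtain D :: int where D: "\<And>i. i < m \<Longrightarrow> int (f (p + i)) = int (f p) + int i * D"
    using assms(1) unfolding arith_prog_def by blast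
  have "D = int (f (Suc p) - f p)"
    using D[of 1] assms(2,3) by simp
  then have "int (f (p + j)) = int (f p + j * (f (Suc p) - f p))"
    using D[OF assms(4)] by simp
  then show ?thesis
    by (rule of_nat_eq_iff[THEN iffD1])
qed

lemma mult_powr_le_diff_powr:
  fixes E c :: real
  assumes "1 < E" "1 \<le> c"
  shows "(E - 1) * (c + 1) powr (- E) \<le> c powr (1 - E) - (c + 1) powr (1 - E)"
proof -
  have der: "\<And>x. c \<le> x \<Longrightarrow> x \<le> c + 1 \<Longrightarrow>
      ((\<lambda>t. t powr (1 - E)) has_real_derivative (1 - E) * x powr (1 - E - 1)) (at x)"
    using assms by (intro has_real_derivative_powr) auto
  obtain z where z: "c < z" "z < c + 1"
    and mvt: "(c + 1) powr (1 - E) - c powr (1 - E) = ((c + 1) - c) * ((1 - E) * z powr (1 - E - 1))"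
    using MVT2[of c "c + 1" "\<lambda>t. t powr (1 - E)", OF _ der] by auto
  have "(E - 1) * (c + 1) powr (- E) \<le> (E - 1) * z powr (- E)"
    using z assms by (intro mult_left_mono powr_mono2') auto
  also have "\<dots> = c powr (1 - E) - (c + 1) powr (1 - E)"
    using mvt by (simp add: algebra_simps)
  finally show ?thesis .
qed

lemma sum_powr_tail_le:
  fixes E :: real and b :: nat
  assumes "1 < E" "1 \<le> b"
  shows "(E - 1) * (\<Sum>a<n. if b < a then real a powr (- E) else 0)
           \<le> real b powr (1 - E) - real (max b (n - 1)) powr (1 - E)"
proof (induction n)
  case (Suc n)
  show ?case
  proof (cases "b < n")
    case True
    then have max: "max b (Suc n - 1) = n" "max b (n - 1) = n - 1"
      by auto
    have n: "real n = real (n - 1) + 1"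
      using True by auto
    have "(E - 1) * real n powr (- E) \<le> real (n - 1) powr (1 - E) - real n powr (1 - E)"
      using mult_powr_le_diff_powr[OF assms(1), of "real (n - 1)"] True assms(2) unfolding n by auto
    with Suc.IH True show ?thesis
      unfolding max by (simp add: distrib_left)
  next
    case False
    with Suc.IH show ?thesis
      by (simp add: max_def)
  qed
qed simp

lemma suminf_powr_tail_le:
  fixes E :: real and b :: nat
  assumes E: "1 < E" and b: "1 \<le> b"
  shows "(\<Sum>a. ennreal (if b < a then real a powr (- E) else 0)) \<le> ennreal (real b powr (1 - E) / (E - 1))"
proof (rule suminf_le_const)
  fix n
  have "(E - 1) * (\<Sum>a<n. if b < a then real a powr (- E) else 0) \<le> real b powr (1 - E)"
    using sum_powr_tail_le[OF E b, of n] powr_ge_zero[of "real (max b (n - 1))" "1 - E"] by linarith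
  then have "(\<Sum>a<n. if b < a then real a powr (- E) else 0) \<le> real b powr (1 - E) / (E - 1)"
    using E by (simp add: field_simps)
  moreover have "(\<Sum>a<n. ennreal (if b < a then real a powr (- E) else 0))
      = ennreal (\<Sum>a<n. if b < a then real a powr (- E) else 0)"
    by simp
  ultimately show "(\<Sum>a<n. ennreal (if b < a then real a powr (- E) else 0))
      \<le> ennreal (real b powr (1 - E) / (E - 1))"
    by (simp only: ennreal_leI)
qed simp

lemma suminf_powr_le_2:
  fixes E :: real
  assumes "2 \<le> E"
  shows "(\<Sum>a. ennreal (if 0 < a then real a powr (- E) else 0)) \<le> 2"
proof -
  have split: "ennreal (if 0 < a then real a powr (- E) else 0)
      = ennreal (if a = 1 then 1 else 0) + ennreal (if 1 < a then real a powr (- E) else 0)" for a :: nat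
    by (cases "a = 1") auto
  have tail: "(\<Sum>a. ennreal (if 1 < a then real a powr (- E) else 0)) \<le> 1"
  proof -
    have "(\<Sum>a. ennreal (if 1 < a then real a powr (- E) else 0)) \<le> ennreal (real 1 powr (1 - E) / (E - 1))"
      using assms by (intro suminf_powr_tail_le) auto
    also have "\<dots> \<le> 1"
      using assms by (simp add: ennreal_le_1 field_simps)
    finally show ?thesis .
  qed
  have "(\<Sum>a. ennreal (if 0 < a then real a powr (- E) else 0))
      = (\<Sum>a. ennreal (if a = 1 then 1 else 0) + ennreal (if 1 < a then real a powr (- E) else 0))"
    by (intro arg_cong[where f = suminf] ext split)
  also have "\<dots> = (\<Sum>a. ennreal (if a = 1 then 1 else 0)) + (\<Sum>a. ennreal (if 1 < a then real a powr (- E) else 0))"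
    by (rule suminf_add[symmetric]) auto
  also have "(\<Sum>a::nat. ennreal (if a = 1 then 1 else 0)) = 1"
    by (subst suminf_finite[of "{1}"]) auto
  also have "1 + (\<Sum>a. ennreal (if 1 < a then real a powr (- E) else 0)) \<le> 1 + 1"
    by (rule add_left_mono[OF tail])
  finally show ?thesis
    by (simp add: one_add_one)
qed

lemma prod_arith_prog_ge:
  assumes A: "1 \<le> A" and d: "1 \<le> d" and "K < m"
  shows "real A ^ (m - K) * real d ^ K \<le> (\<Prod>j<m. real (A + j * d))"
proof -
  have "real A ^ Suc t * real d ^ K \<le> (\<Prod>j<Suc (K + t). real (A + j * d))" for t
  proof (induction t)
    case 0
    have "real d ^ K = (\<Prod>j<K. real d)"
      by simp
    also have "\<dots> \<le> (\<Prod>j<K. real (A + Suc j * d))"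
      by (intro prod_mono) auto
    finally show ?case
      by (subst prod.lessThan_Suc_shift) (auto intro: mult_left_mono)
  next
    case (Suc t)
    have "real A ^ Suc (Suc t) * real d ^ K = (real A ^ Suc t * real d ^ K) * real A"
      by simp
    also have "\<dots> \<le> (\<Prod>j<Suc (K + t). real (A + j * d)) * real (A + Suc (K + t) * d)"
      using Suc.IH by (intro mult_mono prod_nonneg) (auto simp del: of_nat_add of_nat_mult)
    finally show ?case
      by (simp only: add_Suc_right prod.lessThan_Suc)
  qed
  moreover obtain t where "m = Suc (K + t)"
    using \<open>K < m\<close> less_iff_Suc_add by auto
  ultimately show ?thesis
    by simp
qed

section \<open>Cylinders of \<open>G\<close>\<close>

definition G_from :: "(nat \<Rightarrow> nat) \<Rightarrow> nat \<Rightarrow> real set" where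
  "G_from \<sigma> N = {x \<in> J_set. \<forall>m\<ge>N. arith_prog (cf_quot x) (\<sigma> m) m}"

definition cylinder :: "(nat \<Rightarrow> nat) \<Rightarrow> nat \<Rightarrow> nat \<Rightarrow> (nat \<Rightarrow> nat) \<Rightarrow> real set" where
  "cylinder \<sigma> N k u = {x \<in> G_from \<sigma> N. \<forall>i\<in>{1..k}. cf_quot x i = u i}"

definition digit_prod :: "(nat \<Rightarrow> nat) \<Rightarrow> nat \<Rightarrow> real" where
  "digit_prod u k = (\<Prod>i<k. real (u (Suc i)))"

lemma digit_prod_pos: "\<forall>i\<in>{1..k}. 1 \<le> u i \<Longrightarrow> 0 < digit_prod u k"
  unfolding digit_prod_def by (intro prod_pos) (auto simp: Suc_le_eq)

lemma digit_prod_ge_last: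
  assumes "\<forall>i\<in>{1..k}. 1 \<le> u i" "1 \<le> k"
  shows "real (u k) \<le> digit_prod u k"
proof -
  obtain j where k: "k = Suc j"
    using assms(2) by (cases k) auto
  have "1 \<le> (\<Prod>i<j. real (u (Suc i)))"
    using assms(1) k by (intro prod_ge_1) auto
  then show ?thesis
    unfolding digit_prod_def k by (simp add: prod.lessThan_Suc mult_le_cancel_right1)
qed

lemma digit_prod_upd_Suc: "digit_prod (u(Suc k := a)) (Suc k) = digit_prod u k * real a"
  unfolding digit_prod_def by (simp add: prod.lessThan_Suc)

lemma cylinder_subset_J_set: "cylinder \<sigma> N k u \<subseteq> J_set"
  by (auto simp: cylinder_def G_from_def)

lemma cylinder_subset_unit_irrationals: "cylinder \<sigma> N k u \<subseteq> unit_irrationals"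
  using cylinder_subset_J_set J_set_subset_unit_irrationals by blast

lemma bounded_cylinder: "bounded (cylinder \<sigma> N k u)"
proof -
  have "cylinder \<sigma> N k u \<subseteq> {0..1}"
    using cylinder_subset_unit_irrationals by (force simp: unit_irrationals_def)
  then show ?thesis
    by (rule bounded_subset[OF bounded_closed_interval])
qed

lemma diameter_cylinder_le:
  assumes "\<forall>i\<in>{1..k}. 1 \<le> u i"
  shows "diameter (cylinder \<sigma> N k u) \<le> 1 / (digit_prod u k)\<^sup>2"
proof (rule diameter_le)
  fix x y assume xy: "x \<in> cylinder \<sigma> N k u" "y \<in> cylinder \<sigma> N k u"
  then have "x \<in> unit_irrationals" "y \<in> unit_irrationals"
    using cylinder_subset_unit_irrationals by blast+
  moreover have "\<forall>i\<in>{1..k}. cf_quot x i = cf_quot y i"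
    using xy by (simp add: cylinder_def)
  ultimately have "\<bar>x - y\<bar> \<le> 1 / (\<Prod>i<k. real (cf_quot x (Suc i)))\<^sup>2"
    by (rule cf_cylinder_dist)
  also have "(\<Prod>i<k. real (cf_quot x (Suc i))) = digit_prod u k"
    unfolding digit_prod_def using xy(1) by (intro prod.cong) (auto simp: cylinder_def)
  finally show "norm (x - y) \<le> 1 / (digit_prod u k)\<^sup>2"
    by simp
qed (rule disjI2, simp)

lemma cylinder_eq_empty_if_digit_0:
  assumes "i \<in> {1..k}" "u i = 0"
  shows "cylinder \<sigma> N k u = {}"
proof -
  have "1 \<le> cf_quot x i" "cf_quot x i = u i" if "x \<in> cylinder \<sigma> N k u" for x
    using that assms(1) cylinder_subset_unit_irrationals[of \<sigma> N k u] cf_quot_ge_1[of x i]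
    by (auto simp: cylinder_def)
  then show ?thesis
    using assms(2) by fastforce
qed

lemma G_from_subset_UN_cylinder_1: "G_from \<sigma> N \<subseteq> (\<Union>a. cylinder \<sigma> N 1 (\<lambda>_. a))"
  by (auto simp: cylinder_def)

lemma cylinder_subset_UN_upd: "cylinder \<sigma> N k u \<subseteq> (\<Union>a. cylinder \<sigma> N (Suc k) (u(Suc k := a)))"
proof
  fix x assume "x \<in> cylinder \<sigma> N k u"
  then have "x \<in> cylinder \<sigma> N (Suc k) (u(Suc k := cf_quot x (Suc k)))"
    by (auto simp: cylinder_def le_Suc_eq)
  then show "x \<in> (\<Union>a. cylinder \<sigma> N (Suc k) (u(Suc k := a)))"
    by blast
qed

lemma cylinder_upd_eq_empty:
  assumes "1 \<le> k" "a \<le> u k"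
  shows "cylinder \<sigma> N (Suc k) (u(Suc k := a)) = {}"
proof -
  have "cf_quot x k < cf_quot x (Suc k)" if "x \<in> cylinder \<sigma> N (Suc k) (u(Suc k := a))" for x
    using J_set_cf_quot_less[OF subsetD[OF cylinder_subset_J_set that] assms(1)] .
  then show ?thesis
    using assms by (fastforce simp: cylinder_def)
qed

definition ap_extend :: "(nat \<Rightarrow> nat) \<Rightarrow> nat \<Rightarrow> nat \<Rightarrow> nat \<Rightarrow> nat \<Rightarrow> nat \<Rightarrow> nat" where
  "ap_extend u k m A d i = (if k < i \<and> i \<le> k + m then A + (i - Suc k) * d else u i)"

lemma digit_prod_ap_extend:
  "digit_prod (ap_extend u k m A d) (k + m) = digit_prod u k * (\<Prod>j<m. real (A + j * d))"
proof -
  have split: "(\<Prod>i<k + m. f i) = (\<Prod>i<k. f i) * (\<Prod>j<m. f (k + j))" for f :: "nat \<Rightarrow> real"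
    by (induction m) (simp_all add: prod.lessThan_Suc mult.assoc)
  show ?thesis
    unfolding digit_prod_def split
    by (intro arg_cong2[where f = "(*)"] prod.cong) (auto simp: ap_extend_def)
qed

lemma cylinder_subset_UN_ap_extend:
  assumes "N \<le> m" "2 \<le> m" "\<sigma> m = Suc k"
  shows "cylinder \<sigma> N k u \<subseteq> (\<Union>A. \<Union>d. cylinder \<sigma> N (k + m) (ap_extend u k m A d))"
proof
  fix x assume x: "x \<in> cylinder \<sigma> N k u"
  define A where "A = cf_quot x (Suc k)"
  define d where "d = cf_quot x (Suc (Suc k)) - cf_quot x (Suc k)"
  have "x \<in> J_set" "arith_prog (cf_quot x) (Suc k) m"
    using x assms by (auto simp: cylinder_def G_from_def)
  then have block: "cf_quot x (Suc k + j) = A + j * d" if "j < m" for j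
    using assms(2) that J_set_cf_quot_less[of x "Suc k"]
    unfolding A_def d_def by (intro arith_prog_eq) auto
  have "cf_quot x i = ap_extend u k m A d i" if "i \<in> {1..k + m}" for i
  proof (cases "i \<le> k")
    case True
    then show ?thesis
      using x that by (auto simp: cylinder_def ap_extend_def)
  next
    case False
    then show ?thesis
      using block[of "i - Suc k"] that by (auto simp: ap_extend_def)
  qed
  then have "x \<in> cylinder \<sigma> N (k + m) (ap_extend u k m A d)"
    using x by (simp add: cylinder_def)
  then show "x \<in> (\<Union>A. \<Union>d. cylinder \<sigma> N (k + m) (ap_extend u k m A d))"
    by blast
qed

lemma cylinder_ap_extend_eq_empty:
  assumes "1 \<le> k" "2 \<le> m" "\<not> (u k < A \<and> 0 < d)"
  shows "cylinder \<sigma> N (k + m) (ap_extend u k m A d) = {}"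
proof -
  have "u k < A \<and> A < A + d" if "x \<in> cylinder \<sigma> N (k + m) (ap_extend u k m A d)" for x
  proof -
    have "x \<in> J_set"
      using that cylinder_subset_J_set by blast
    moreover have "cf_quot x k = u k" "cf_quot x (Suc k) = A" "cf_quot x (Suc (Suc k)) = A + d"
      using that assms(1,2) by (auto simp: cylinder_def ap_extend_def)
    ultimately show ?thesis
      using J_set_cf_quot_less[of x k] J_set_cf_quot_less[of x "Suc k"] assms(1) by auto
  qed
  then show ?thesis
    using assms(3) by auto
qed

section \<open>Pre-measure bounds on cylinders\<close>

text \<open>The exponent \<open>2 s (m + 1 - K) - 1\<close> gained from block \<open>m + 1\<close>, minus the exponent
  \<open>1 - 2 s\<close> lost at each free digit between blocks \<open>m\<close> and \<open>m + 1\<close>.\<close>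

definition block_slack :: "(nat \<Rightarrow> nat) \<Rightarrow> real \<Rightarrow> nat \<Rightarrow> nat \<Rightarrow> real" where
  "block_slack \<sigma> s K m = 2 * s * real (Suc m - K) - 1 - (1 - 2 * s) * real (\<sigma> (Suc m) - (\<sigma> m + m))"

context
  fixes \<sigma> :: "nat \<Rightarrow> nat" and N :: nat and s \<delta> :: real
  assumes s_pos: "0 < s" and s_le: "s \<le> 1/2" and \<delta>_nonneg: "0 \<le> \<delta>"
begin

text \<open>The factor \<open>a\<^sub>k\<^sup>-\<^sup>g\<close> records what the summation over the digits after position \<open>k\<close>
  has gained; since digits increase, these sums only run over values above \<open>a\<^sub>k\<close>.\<close>

definition cylinder_bound :: "nat \<Rightarrow> real \<Rightarrow> real \<Rightarrow> bool" where
  "cylinder_bound k g C \<longleftrightarrow> (\<forall>u. (\<forall>i\<in>{1..k}. 1 \<le> u i) \<longrightarrow>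
     hausdorff_pre s \<delta> (cylinder \<sigma> N k u) \<le> ennreal (C * digit_prod u k powr (- (2 * s)) * real (u k) powr (- g)))"

lemma cylinder_boundD:
  "cylinder_bound k g C \<Longrightarrow> \<forall>i\<in>{1..k}. 1 \<le> u i \<Longrightarrow>
     hausdorff_pre s \<delta> (cylinder \<sigma> N k u) \<le> ennreal (C * digit_prod u k powr (- (2 * s)) * real (u k) powr (- g))"
  unfolding cylinder_bound_def by blast

lemma cylinder_bound_mono:
  assumes "cylinder_bound k g C" "1 \<le> k" "g' \<le> g" "C \<le> C'" "0 \<le> C"
  shows "cylinder_bound k g' C'"
  unfolding cylinder_bound_def
proof (intro allI impI)
  fix u :: "nat \<Rightarrow> nat" assume u: "\<forall>i\<in>{1..k}. 1 \<le> u i"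
  then have "1 \<le> real (u k)"
    using assms(2) by auto
  then have "real (u k) powr (- g) \<le> real (u k) powr (- g')"
    using assms(3) by (intro powr_mono) auto
  then have "C * digit_prod u k powr (- (2 * s)) * real (u k) powr (- g)
      \<le> C' * digit_prod u k powr (- (2 * s)) * real (u k) powr (- g')"
    using assms(4,5) by (intro mult_mono mult_right_mono) auto
  then show "hausdorff_pre s \<delta> (cylinder \<sigma> N k u) \<le> ennreal (C' * digit_prod u k powr (- (2 * s)) * real (u k) powr (- g'))"
    using cylinder_boundD[OF assms(1) u] ennreal_leI order_trans by blast
qed

text \<open>Deep enough, a cylinder is a single admissible cover set: its rank \<open>L\<close> digit is at least \<open>L\<close>,
  so its diameter is at most \<open>L\<^sup>-\<^sup>2\<close>.\<close>

lemma cylinder_bound_deep: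
  assumes L: "1 \<le> L" and "1 / real L \<le> \<delta>"
  shows "cylinder_bound L 0 1"
  unfolding cylinder_bound_def
proof (intro allI impI)
  fix u :: "nat \<Rightarrow> nat" assume u: "\<forall>i\<in>{1..L}. 1 \<le> u i"
  let ?E = "cylinder \<sigma> N L u" and ?P = "digit_prod u L"
  have "u L \<noteq> 0"
    using u L by (metis atLeastAtMost_iff not_one_le_zero order_refl)
  have "hausdorff_pre s \<delta> ?E \<le> ennreal (?P powr (- (2 * s)))"
  proof (cases "?E = {}")
    case True
    then show ?thesis
      using hausdorff_pre_empty[OF \<delta>_nonneg] by simp
  next
    case False
    then obtain x where "x \<in> ?E"
      by blast
    then have "real L \<le> real (u L)"
      using J_set_cf_quot_ge[of x L] cylinder_subset_J_set L by (force simp: cylinder_def)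
    also have "\<dots> \<le> ?P"
      by (rule digit_prod_ge_last[OF u L])
    finally have "real L \<le> ?P" .
    moreover have "?P * 1 \<le> ?P * ?P"
      using \<open>real L \<le> ?P\<close> L by (intro mult_left_mono) auto
    ultimately have "real L \<le> ?P\<^sup>2"
      by (simp add: power2_eq_square)
    then have "1 / ?P\<^sup>2 \<le> 1 / real L"
      using L by (intro divide_left_mono mult_pos_pos) auto
    have diam: "diameter ?E \<le> 1 / ?P\<^sup>2"
      by (rule diameter_cylinder_le[OF u])
    have "hausdorff_pre s \<delta> ?E \<le> ennreal (diameter ?E powr s)"
      using diam \<open>1 / ?P\<^sup>2 \<le> 1 / real L\<close> assms(2)
      by (intro hausdorff_pre_le_diameter_powr bounded_cylinder \<delta>_nonneg) linarith
    also have "\<dots> \<le> ennreal ((1 / ?P\<^sup>2) powr s)"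
      using diam s_pos diameter_ge_0[OF bounded_cylinder] by (intro ennreal_leI powr_mono2) auto
    also have "(1 / ?P\<^sup>2) powr s = ?P powr (- (2 * s))"
    proof -
      have sq: "?P\<^sup>2 = ?P powr 2"
        using digit_prod_pos[OF u] by (simp add: powr_numeral)
      show ?thesis
        unfolding sq using digit_prod_pos[OF u] by (simp add: powr_divide powr_powr powr_minus_divide del: powr_numeral)
    qed
    finally show ?thesis .
  qed
  then show "hausdorff_pre s \<delta> ?E \<le> ennreal (1 * ?P powr (- (2 * s)) * real (u L) powr (- 0))"
    using \<open>u L \<noteq> 0\<close> by simp
qed

lemma cylinder_bound_free_digit:
  assumes k: "1 \<le> k" and g: "2 \<le> g + 2 * s" and C: "0 \<le> C" and bound: "cylinder_bound (Suc k) g C"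
  shows "cylinder_bound k (g + 2 * s - 1) C"
  unfolding cylinder_bound_def
proof (intro allI impI)
  fix u :: "nat \<Rightarrow> nat" assume u: "\<forall>i\<in>{1..k}. 1 \<le> u i"
  define b where "b = u k"
  define w where "w = C * digit_prod u k powr (- (2 * s))"
  define f where "f a = (if b < a then real a powr (- (g + 2 * s)) else 0)" for a :: nat
  have b: "1 \<le> b"
    using u k by (auto simp: b_def)
  have w: "0 \<le> w"
    using C by (simp add: w_def)
  have piece: "hausdorff_pre s \<delta> (cylinder \<sigma> N (Suc k) (u(Suc k := a))) \<le> ennreal w * ennreal (f a)" for a
  proof (cases "b < a")
    case False
    then show ?thesis
      using cylinder_upd_eq_empty[OF k] hausdorff_pre_empty[OF \<delta>_nonneg] by (simp add: b_def)
  next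
    case True
    then have "\<forall>i\<in>{1..Suc k}. 1 \<le> (u(Suc k := a)) i"
      using u b by auto
    then have "hausdorff_pre s \<delta> (cylinder \<sigma> N (Suc k) (u(Suc k := a)))
        \<le> ennreal (C * digit_prod (u(Suc k := a)) (Suc k) powr (- (2 * s)) * real ((u(Suc k := a)) (Suc k)) powr (- g))"
      by (rule cylinder_boundD[OF bound])
    also have "C * digit_prod (u(Suc k := a)) (Suc k) powr (- (2 * s)) * real ((u(Suc k := a)) (Suc k)) powr (- g)
        = w * f a"
      using True unfolding digit_prod_upd_Suc w_def f_def
      by (simp add: powr_mult powr_add[symmetric] algebra_simps)
    also have "ennreal (w * f a) = ennreal w * ennreal (f a)"
      using w by (rule ennreal_mult')
    finally show ?thesis .
  qed
  have "hausdorff_pre s \<delta> (cylinder \<sigma> N k u) \<le> (\<Sum>a. hausdorff_pre s \<delta> (cylinder \<sigma> N (Suc k) (u(Suc k := a))))"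
    using hausdorff_pre_mono[OF cylinder_subset_UN_upd] hausdorff_pre_UN_le order_trans by blast
  also have "\<dots> \<le> (\<Sum>a. ennreal w * ennreal (f a))"
    by (intro suminf_le piece summableI)
  also have "\<dots> = ennreal w * (\<Sum>a. ennreal (f a))"
    by simp
  also have "\<dots> \<le> ennreal w * ennreal (real b powr (1 - (g + 2 * s)) / (g + 2 * s - 1))"
    unfolding f_def using g b by (intro mult_left_mono suminf_powr_tail_le) auto
  also have "\<dots> \<le> ennreal w * ennreal (real b powr (- (g + 2 * s - 1)))"
    using g b by (intro mult_left_mono ennreal_leI) (auto simp: divide_le_eq)
  finally show "hausdorff_pre s \<delta> (cylinder \<sigma> N k u)
      \<le> ennreal (C * digit_prod u k powr (- (2 * s)) * real (u k) powr (- (g + 2 * s - 1)))"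
    using w by (simp add: ennreal_mult' w_def b_def)
qed

lemma cylinder_bound_free_digits:
  assumes "1 \<le> k" "1 \<le> g - real G * (1 - 2 * s)" "0 \<le> C" "cylinder_bound (k + G) g C"
  shows "cylinder_bound k (g - real G * (1 - 2 * s)) C"
  using assms
proof (induction G arbitrary: k)
  case (Suc G)
  have "cylinder_bound (Suc k) (g - real G * (1 - 2 * s)) C"
    using Suc.prems s_le by (intro Suc.IH) (auto simp: algebra_simps)
  then have "cylinder_bound k (g - real G * (1 - 2 * s) + 2 * s - 1) C"
    using Suc.prems by (intro cylinder_bound_free_digit) (auto simp: algebra_simps)
  then show ?case
    by (simp add: algebra_simps)
qed simp

lemma hausdorff_pre_G_from_le_of_cylinder_bound:
  assumes bound: "cylinder_bound 1 g C" and g: "2 \<le> g + 2 * s" and C: "0 \<le> C"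
  shows "hausdorff_pre s \<delta> (G_from \<sigma> N) \<le> ennreal (2 * C)"
proof -
  define f where "f a = (if 0 < a then real a powr (- (g + 2 * s)) else 0)" for a :: nat
  have piece: "hausdorff_pre s \<delta> (cylinder \<sigma> N 1 (\<lambda>_. a)) \<le> ennreal C * ennreal (f a)" for a
  proof (cases "0 < a")
    case False
    then show ?thesis
      using cylinder_eq_empty_if_digit_0[of 1 1 "\<lambda>_. a"] hausdorff_pre_empty[OF \<delta>_nonneg] by simp
  next
    case True
    then have "\<forall>i\<in>{1..1}. 1 \<le> (\<lambda>_::nat. a) i"
      by simp
    then have "hausdorff_pre s \<delta> (cylinder \<sigma> N 1 (\<lambda>_. a))
        \<le> ennreal (C * digit_prod (\<lambda>_. a) 1 powr (- (2 * s)) * real a powr (- g))"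
      by (rule cylinder_boundD[OF bound])
    also have "C * digit_prod (\<lambda>_. a) 1 powr (- (2 * s)) * real a powr (- g) = C * f a"
      using True by (simp add: digit_prod_def f_def powr_add[symmetric] algebra_simps)
    also have "ennreal (C * f a) = ennreal C * ennreal (f a)"
      using C by (rule ennreal_mult')
    finally show ?thesis .
  qed
  have "hausdorff_pre s \<delta> (G_from \<sigma> N) \<le> (\<Sum>a. hausdorff_pre s \<delta> (cylinder \<sigma> N 1 (\<lambda>_. a)))"
    using hausdorff_pre_mono[OF G_from_subset_UN_cylinder_1] hausdorff_pre_UN_le order_trans by blast
  also have "\<dots> \<le> (\<Sum>a. ennreal C * ennreal (f a))"
    by (intro suminf_le piece summableI)
  also have "\<dots> = ennreal C * (\<Sum>a. ennreal (f a))"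
    by simp
  also have "\<dots> \<le> ennreal C * 2"
    unfolding f_def using g by (intro mult_left_mono suminf_powr_le_2) auto
  finally show ?thesis
    using C by (simp add: ennreal_mult' mult.commute)
qed

lemma hausdorff_pre_cylinder_ap_extend_le:
  assumes m: "2 \<le> m" "K < m" and k: "1 \<le> k" and u: "\<forall>i\<in>{1..k}. 1 \<le> u i"
    and g: "0 \<le> g" and C: "0 \<le> C" and bound: "cylinder_bound (k + m) g C"
  shows "hausdorff_pre s \<delta> (cylinder \<sigma> N (k + m) (ap_extend u k m A d))
    \<le> ennreal (C * digit_prod u k powr (- (2 * s)))
      * ennreal (if u k < A then real A powr (- (2 * s * real (m - K) + g)) else 0)
      * ennreal (if 0 < d then real d powr (- (2 * s * real K)) else 0)"
    (is "_ \<le> ennreal ?w * ennreal ?f * ennreal ?h")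
proof (cases "u k < A \<and> 0 < d")
  case False
  then show ?thesis
    using cylinder_ap_extend_eq_empty[OF k m(1)] hausdorff_pre_empty[OF \<delta>_nonneg] by simp
next
  case True
  then have A: "1 \<le> A" and d: "1 \<le> d"
    by auto
  define Q where "Q = (\<Prod>j<m. real (A + j * d))"
  have Q: "real A ^ (m - K) * real d ^ K \<le> Q"
    unfolding Q_def by (rule prod_arith_prog_ge[OF A d m(2)])
  have pos: "0 < real A ^ (m - K) * real d ^ K"
    using A d by simp
  have "C * (digit_prod u k * Q) powr (- (2 * s)) * real (A + (m - 1) * d) powr (- g)
      = ?w * (Q powr (- (2 * s)) * real (A + (m - 1) * d) powr (- g))"
    using digit_prod_pos[OF u] Q pos by (simp add: powr_mult mult_ac)
  also have "\<dots> \<le> ?w * ((real A ^ (m - K) * real d ^ K) powr (- (2 * s)) * real A powr (- g))"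
    using Q pos A g s_pos C by (intro mult_left_mono mult_mono powr_mono2') auto
  also have "\<dots> = ?w * ?f * ?h"
    using True A d
    by (simp add: powr_mult powr_add[symmetric] powr_realpow[symmetric] powr_powr algebra_simps)
  finally have weight: "C * (digit_prod u k * Q) powr (- (2 * s)) * real (A + (m - 1) * d) powr (- g)
      \<le> ?w * ?f * ?h" .
  have "\<forall>i\<in>{1..k + m}. 1 \<le> ap_extend u k m A d i"
    using u A by (auto simp: ap_extend_def)
  then have "hausdorff_pre s \<delta> (cylinder \<sigma> N (k + m) (ap_extend u k m A d))
      \<le> ennreal (C * digit_prod (ap_extend u k m A d) (k + m) powr (- (2 * s))
           * real (ap_extend u k m A d (k + m)) powr (- g))"
    by (rule cylinder_boundD[OF bound])
  also have "digit_prod (ap_extend u k m A d) (k + m) = digit_prod u k * Q"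
    by (simp add: digit_prod_ap_extend Q_def)
  also have "ap_extend u k m A d (k + m) = A + (m - 1) * d"
    using m(1) by (simp add: ap_extend_def)
  also have "ennreal (C * (digit_prod u k * Q) powr (- (2 * s)) * real (A + (m - 1) * d) powr (- g))
      \<le> ennreal (?w * ?f * ?h)"
    by (rule ennreal_leI[OF weight])
  also have "ennreal (?w * ?f * ?h) = ennreal ?w * ennreal ?f * ennreal ?h"
    using C by (simp add: ennreal_mult)
  finally show ?thesis .
qed

text \<open>An arithmetic block \<open>A, A + d, \<dots>, A + (m - 1) d\<close> has product at least \<open>A\<^sup>m\<^sup>-\<^sup>K d\<^sup>K\<close>.
  Summing the resulting bound over \<open>d\<close> converges since \<open>2 s K \<ge> 2\<close>, and summing over \<open>A > a\<^sub>k\<close>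
  turns the exponent \<open>2 s (m - K)\<close> gained on \<open>A\<close> into a power of \<open>a\<^sub>k\<close>.\<close>

lemma cylinder_bound_block:
  assumes m: "N \<le> m" "2 \<le> m" "K < m" and k: "1 \<le> k" "\<sigma> m = Suc k"
    and K: "2 \<le> 2 * s * real K" and g: "0 \<le> g" and C: "0 \<le> C"
    and E: "3 \<le> 2 * s * real (m - K) + g"
    and bound: "cylinder_bound (k + m) g C"
  shows "cylinder_bound k (2 * s * real (m - K) + g - 1) (2 * C / (2 * s * real (m - K) + g - 1))"
  unfolding cylinder_bound_def
proof (intro allI impI)
  fix u :: "nat \<Rightarrow> nat" assume u: "\<forall>i\<in>{1..k}. 1 \<le> u i"
  define E where "E = 2 * s * real (m - K) + g"
  define b where "b = u k"
  define w where "w = C * digit_prod u k powr (- (2 * s))"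
  define f where "f A = (if b < A then real A powr (- E) else 0)" for A :: nat
  define h where "h d = (if 0 < d then real d powr (- (2 * s * real K)) else 0)" for d :: nat
  have b: "1 \<le> b"
    using u k by (auto simp: b_def)
  have w: "0 \<le> w"
    using C by (simp add: w_def)
  have piece: "hausdorff_pre s \<delta> (cylinder \<sigma> N (k + m) (ap_extend u k m A d))
      \<le> ennreal w * ennreal (f A) * ennreal (h d)" for A d
    unfolding w_def f_def h_def b_def E_def
    using m(2,3) k(1) u g C bound by (rule hausdorff_pre_cylinder_ap_extend_le)
  have "hausdorff_pre s \<delta> (cylinder \<sigma> N k u)
      \<le> (\<Sum>A. hausdorff_pre s \<delta> (\<Union>d. cylinder \<sigma> N (k + m) (ap_extend u k m A d)))"
    using hausdorff_pre_mono[OF cylinder_subset_UN_ap_extend[of N m \<sigma> k u, OF m(1,2) k(2)]] hausdorff_pre_UN_le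
      order_trans by blast
  also have "\<dots> \<le> (\<Sum>A. \<Sum>d. hausdorff_pre s \<delta> (cylinder \<sigma> N (k + m) (ap_extend u k m A d)))"
    by (intro suminf_le hausdorff_pre_UN_le summableI)
  also have "\<dots> \<le> (\<Sum>A. \<Sum>d. ennreal w * ennreal (f A) * ennreal (h d))"
    by (intro suminf_le piece summableI)
  also have "\<dots> = ennreal w * (\<Sum>A. ennreal (f A)) * (\<Sum>d. ennreal (h d))"
    by simp
  also have "\<dots> \<le> ennreal w * ennreal (real b powr (1 - E) / (E - 1)) * 2"
    unfolding f_def h_def using E K b unfolding E_def
    by (intro mult_mono mult_left_mono suminf_powr_tail_le suminf_powr_le_2) auto
  also have "\<dots> = ennreal (w * (real b powr (1 - E) / (E - 1)) * 2)"
  proof -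
    have "0 \<le> real b powr (1 - E) / (E - 1)"
      using E unfolding E_def by simp
    then show ?thesis
      using w by (simp only: ennreal_mult'[symmetric] ennreal_mult''[symmetric] mult_nonneg_nonneg
          ennreal_numeral[symmetric] zero_le_numeral)
  qed
  also have "w * (real b powr (1 - E) / (E - 1)) * 2
      = 2 * C / (E - 1) * digit_prod u k powr (- (2 * s)) * real b powr (- (E - 1))"
    by (simp add: w_def)
  finally show "hausdorff_pre s \<delta> (cylinder \<sigma> N k u) \<le> ennreal (2 * C / (2 * s * real (m - K) + g - 1)
      * digit_prod u k powr (- (2 * s)) * real (u k) powr (- (2 * s * real (m - K) + g - 1)))"
    unfolding E_def b_def .
qed

lemma cylinder_bound_block_then_free:
  assumes m: "N \<le> m" "2 \<le> m" "K < m" and k: "1 \<le> k" "\<sigma> m = Suc (k + G)"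
    and K: "2 \<le> 2 * s * real K" and g: "0 \<le> g" and C: "0 \<le> C"
    and E: "3 \<le> 2 * s * real (m - K) + g"
    and g': "1 \<le> g'" "(1 - 2 * s) * real G \<le> 2 * s * real (m - K) + g - 1 - g'"
    and bound: "cylinder_bound (k + G + m) g C"
  shows "cylinder_bound k g' (2 * C / (2 * s * real (m - K) + g - 1))"
proof -
  let ?E = "2 * s * real (m - K) + g"
  have "cylinder_bound (k + G) (?E - 1) (2 * C / (?E - 1))"
    using m k K g C E bound by (intro cylinder_bound_block) auto
  then have "cylinder_bound k (?E - 1 - real G * (1 - 2 * s)) (2 * C / (?E - 1))"
    using k g' C E by (intro cylinder_bound_free_digits) (auto simp: algebra_simps)
  then show ?thesis
    using k g' C E by (elim cylinder_bound_mono) (auto simp: algebra_simps)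
qed

context
  fixes K :: nat
  assumes \<sigma>_pos: "\<And>m. 1 \<le> m \<Longrightarrow> 1 \<le> \<sigma> m" and \<sigma>_gap: "\<And>m. 1 \<le> m \<Longrightarrow> \<sigma> m + m \<le> \<sigma> (Suc m)"
    and K: "2 \<le> 2 * s * real K"
    and good: "\<And>m. N \<le> m \<Longrightarrow> K + 2 \<le> m \<and> 3 \<le> 2 * s * real (m - K) \<and> 0 \<le> block_slack \<sigma> s K m"
begin

lemma cylinder_bound_propagate:
  assumes "cylinder_bound (\<sigma> n + n - 1) \<Gamma> C" "N \<le> j" "j \<le> n" "1 \<le> \<Gamma>" "0 \<le> C"
  shows "cylinder_bound (\<sigma> j + j - 1) \<Gamma> C"
  using assms(3)
proof (induction rule: inc_induct)
  case base
  show ?case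
    by (rule assms(1))
next
  case (step m)
  let ?G = "\<sigma> (Suc m) - (\<sigma> m + m)" and ?E = "2 * s * real (Suc m - K) + \<Gamma> - 1"
  have m: "N \<le> m" "1 \<le> m"
    using step.hyps assms(2) good[of m] by auto
  then have levels: "\<sigma> (Suc m) = Suc (\<sigma> m + m - 1 + ?G)" "\<sigma> m + m - 1 + ?G + Suc m = \<sigma> (Suc m) + Suc m - 1"
    using \<sigma>_pos[of m] \<sigma>_gap[of m] by auto
  have "cylinder_bound (\<sigma> m + m - 1 + ?G + Suc m) \<Gamma> C"
    using step.IH levels(2) by simp
  then have "cylinder_bound (\<sigma> m + m - 1) \<Gamma> (2 * C / ?E)"
    using good[of m] good[of "Suc m"] m \<sigma>_pos[of m] assms(4,5)
    by (intro cylinder_bound_block_then_free[where m = "Suc m" and k = "\<sigma> m + m - 1" and G = ?G,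
          OF _ _ _ _ levels(1) K])
      (auto simp: block_slack_def algebra_simps)
  moreover have "2 \<le> ?E"
    using good[of "Suc m"] m assms(4) by auto
  then have "2 * C / ?E \<le> C"
    using mult_left_mono[of 2 ?E C] assms(5) by (simp add: divide_le_eq mult.commute)
  ultimately show ?case
    using assms(5) m \<sigma>_pos[of m] \<open>2 \<le> ?E\<close> by (elim cylinder_bound_mono) auto
qed

text \<open>Starting from a cylinder deep enough to be a single cover set, the bound is carried through the
  last block \<open>n + 1\<close>, then back block by block to block \<open>N\<close>, and through the first \<open>\<sigma> N - 1\<close> digits.
  The surplus \<open>\<sigma> N + 1\<close> in the slack of block \<open>n + 1\<close> pays for these first digits.\<close>

lemma hausdorff_pre_G_from_le_last_block:
  assumes n: "N \<le> n" "real (\<sigma> N) + 1 \<le> block_slack \<sigma> s K n" "1 / real (\<sigma> (Suc n) + n) \<le> \<delta>"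
  shows "hausdorff_pre s \<delta> (G_from \<sigma> N) \<le> ennreal (4 / (2 * s * real (Suc n - K) - 1))"
proof -
  define \<Gamma> where "\<Gamma> = real (\<sigma> N) + 1"
  define C where "C = 2 / (2 * s * real (Suc n - K) - 1)"
  let ?G = "\<sigma> (Suc n) - (\<sigma> n + n)" and ?E = "2 * s * real (N - K) + \<Gamma> - 1"
  have N: "K + 2 \<le> N" "3 \<le> 2 * s * real (N - K)" and Suc_n: "3 \<le> 2 * s * real (Suc n - K)"
    using good[of N] good[of "Suc n"] n(1) by auto
  have C: "0 \<le> C"
    unfolding C_def using Suc_n by (intro divide_nonneg_nonneg) linarith+
  have "\<sigma> (N - 1) + (N - 1) \<le> \<sigma> N" "1 \<le> \<sigma> (N - 1)"
    using \<sigma>_gap[of "N - 1"] \<sigma>_pos[of "N - 1"] N(1) by auto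
  then have \<sigma>_N: "2 \<le> \<sigma> N"
    using N(1) by linarith
  have levels: "\<sigma> (Suc n) = Suc (\<sigma> n + n - 1 + ?G)" "\<sigma> n + n - 1 + ?G + Suc n = \<sigma> (Suc n) + n"
    using \<sigma>_pos[of n] \<sigma>_gap[of n] N(1) n(1) by auto
  have "cylinder_bound (\<sigma> (Suc n) + n) 0 1"
    using n(1,3) N(1) by (intro cylinder_bound_deep) auto
  then have "cylinder_bound (\<sigma> n + n - 1) \<Gamma> (2 * 1 / (2 * s * real (Suc n - K) + 0 - 1))"
    using n N Suc_n \<sigma>_pos[of n] levels(2)
    by (intro cylinder_bound_block_then_free[where m = "Suc n" and k = "\<sigma> n + n - 1" and G = ?G,
          OF _ _ _ _ levels(1) K]) (auto simp: block_slack_def \<Gamma>_def algebra_simps)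
  then have "cylinder_bound (\<sigma> n + n - 1) \<Gamma> C"
    by (simp only: C_def mult_1_right add_0_right)
  then have "cylinder_bound (\<sigma> N + N - 1) \<Gamma> C"
    by (rule cylinder_bound_propagate) (use n(1) C in \<open>auto simp: \<Gamma>_def\<close>)
  moreover have "\<sigma> N = Suc (1 + (\<sigma> N - 2))" "\<sigma> N + N - 1 = 1 + (\<sigma> N - 2) + N"
    using \<sigma>_N by auto
  moreover have "(1 - 2 * s) * real (\<sigma> N - 2) \<le> real (\<sigma> N - 2)" "0 \<le> 2 * s * real (N - K)"
    using s_pos by (auto simp: algebra_simps)
  ultimately have "cylinder_bound 1 2 (2 * C / ?E)"
    using N \<sigma>_N C
    by (intro cylinder_bound_block_then_free[where m = N and k = 1 and G = "\<sigma> N - 2", OF _ _ _ _ _ K])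
      (auto simp: \<Gamma>_def)
  then have "hausdorff_pre s \<delta> (G_from \<sigma> N) \<le> ennreal (2 * (2 * C / ?E))"
    using C N s_pos by (intro hausdorff_pre_G_from_le_of_cylinder_bound) (auto simp: \<Gamma>_def)
  also have "ennreal (2 * (2 * C / ?E)) \<le> ennreal (2 * C)"
    using C N \<sigma>_N mult_left_mono[of 2 ?E C]
    by (intro ennreal_leI) (auto simp: \<Gamma>_def divide_le_eq mult.commute)
  finally show ?thesis
    by (simp add: C_def)
qed

lemma hausdorff_pre_G_from_eq_0:
  assumes slack: "filterlim (block_slack \<sigma> s K) at_top sequentially" and \<delta>: "0 < \<delta>"
  shows "hausdorff_pre s \<delta> (G_from \<sigma> N) = 0"
proof -
  define f where "f n = 4 / (2 * s * real (Suc n - K) - 1)" for n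
  have slack_le: "block_slack \<sigma> s K n \<le> 2 * s * real (Suc n - K) - 1" for n
    using s_le by (simp add: block_slack_def)
  have "filterlim (\<lambda>n. 2 * s * real (Suc n - K) - 1) at_top sequentially"
    using slack_le by (intro filterlim_at_top_mono[OF slack] always_eventually) auto
  then have "f \<longlonglongrightarrow> 0"
    unfolding f_def by (intro tendsto_divide_0[OF tendsto_const] filterlim_at_top_imp_at_infinity)
  then have lim: "(\<lambda>n. ennreal (f n)) \<longlonglongrightarrow> 0"
    using tendsto_ennrealI by fastforce
  have "eventually (\<lambda>n. real (\<sigma> N) + 1 \<le> block_slack \<sigma> s K n) sequentially"
    using slack by (simp add: filterlim_at_top)
  moreover have "eventually (\<lambda>n. 1 / real (\<sigma> (Suc n) + n) \<le> \<delta>) sequentially"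
  proof -
    obtain n0 :: nat where "1 / \<delta> \<le> real n0"
      using real_arch_simple by blast
    then have "1 / real (\<sigma> (Suc n) + n) \<le> \<delta>" if "max 1 n0 \<le> n" for n
      using that \<delta> by (auto simp: divide_le_eq mult.commute intro: order_trans[OF _ mult_left_mono])
    then show ?thesis
      unfolding eventually_sequentially by blast
  qed
  ultimately have "eventually (\<lambda>n. hausdorff_pre s \<delta> (G_from \<sigma> N) \<le> ennreal (f n)) sequentially"
    using eventually_ge_at_top[of N]
    by eventually_elim (simp add: f_def hausdorff_pre_G_from_le_last_block)
  then have "hausdorff_pre s \<delta> (G_from \<sigma> N) \<le> 0"
    using tendsto_le[OF trivial_limit_sequentially lim tendsto_const] by blast
  then show ?thesis
    by simp
qed

end

end

text \<open>Block \<open>m + 1\<close> gains \<open>\<approx> 2 s m\<close> while the \<open>\<approx> (\<beta> - 1) m\<close> free digits before it cost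
  \<open>(1 - 2 s) (\<beta> - 1) m\<close>; the net rate \<open>2 s - (1 - 2 s) (\<beta> - 1) = 2 s \<beta> - (\<beta> - 1)\<close> is positive
  exactly when \<open>s > (\<beta> - 1) / (2 \<beta>)\<close>.\<close>

lemma block_slack_tendsto_at_top:
  assumes gap: "\<And>m. 1 \<le> m \<Longrightarrow> \<sigma> m + m \<le> \<sigma> (Suc m)"
    and lim: "(\<lambda>n. (real (\<sigma> (Suc n)) - real (\<sigma> n)) / real n) \<longlonglongrightarrow> \<beta>"
    and s: "\<beta> - 1 < 2 * s * \<beta>"
  shows "filterlim (block_slack \<sigma> s K) at_top sequentially"
proof -
  define R where "R n = (real (\<sigma> (Suc n)) - real (\<sigma> n)) / real n" for n
  define rate where "rate n = 2 * s + (2 * s * (1 - real K) - 1) / real n - (1 - 2 * s) * (R n - 1)" for n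
  have "rate \<longlonglongrightarrow> 2 * s + 0 - (1 - 2 * s) * (\<beta> - 1)"
    unfolding rate_def R_def by (intro tendsto_intros lim lim_const_over_n)
  moreover have "0 < 2 * s + 0 - (1 - 2 * s) * (\<beta> - 1)"
    using s by (simp add: algebra_simps)
  ultimately have rate: "filterlim (\<lambda>n. rate n * real n) at_top sequentially"
    by (rule filterlim_tendsto_pos_mult_at_top[OF _ _ filterlim_real_sequentially])
  have "rate n * real n = block_slack \<sigma> s K n" if "max 1 K \<le> n" for n
  proof -
    have "real n * R n = real (\<sigma> (Suc n)) - real (\<sigma> n)"
      using that by (simp add: R_def)
    moreover have "real (\<sigma> (Suc n) - (\<sigma> n + n)) = real (\<sigma> (Suc n)) - real (\<sigma> n) - real n"
      using gap[of n] that by (simp add: of_nat_diff)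
    ultimately have gap_eq: "real (\<sigma> (Suc n) - (\<sigma> n + n)) = real n * (R n - 1)"
      by (simp add: algebra_simps)
    have K_eq: "real (Suc n - K) = real n + 1 - real K"
      using that by (simp add: of_nat_diff)
    show ?thesis
      unfolding block_slack_def gap_eq K_eq rate_def using that by (simp add: field_simps)
  qed
  then have "eventually (\<lambda>n. rate n * real n = block_slack \<sigma> s K n) sequentially"
    unfolding eventually_sequentially by blast
  then have "filterlim (\<lambda>n. rate n * real n) at_top sequentially
      = filterlim (block_slack \<sigma> s K) at_top sequentially"
    by (rule filterlim_cong[OF refl refl])
  with rate show ?thesis
    by simp
qed

lemma hausdorff_pre_G_set_eq_0:
  assumes pos: "\<And>m. 1 \<le> m \<Longrightarrow> 1 \<le> \<sigma> m" and gap: "\<And>m. 1 \<le> m \<Longrightarrow> \<sigma> m + m \<le> \<sigma> (Suc m)"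
    and lim: "(\<lambda>n. (real (\<sigma> (Suc n)) - real (\<sigma> n)) / real n) \<longlonglongrightarrow> \<beta>"
    and s: "0 < s" "s \<le> 1/2" "\<beta> - 1 < 2 * s * \<beta>" and \<delta>: "0 < \<delta>"
  shows "hausdorff_pre s \<delta> (G_set \<sigma>) = 0"
proof -
  define K where "K = nat \<lceil>1 / s\<rceil>"
  have "1 / s \<le> real K"
    unfolding K_def by linarith
  then have K: "2 \<le> 2 * s * real K"
    using s(1) by (simp add: divide_le_eq mult.commute)
  have slack: "filterlim (block_slack \<sigma> s K) at_top sequentially"
    using gap lim s(3) by (rule block_slack_tendsto_at_top)
  define M where "M = K + 2 + nat \<lceil>3 / (2 * s)\<rceil>"
  have "3 \<le> 2 * s * real (m - K)" if "M \<le> m" for m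
  proof -
    have "3 / (2 * s) \<le> real (m - K)"
      using that by (simp add: M_def of_nat_diff) linarith
    then show ?thesis
      using s(1) by (simp add: divide_le_eq mult.commute del: of_nat_diff)
  qed
  moreover obtain M' where "\<And>m. M' \<le> m \<Longrightarrow> 0 \<le> block_slack \<sigma> s K m"
    using slack by (auto simp: filterlim_at_top eventually_sequentially)
  moreover define N0 where "N0 = max M M'"
  ultimately have good: "\<And>m. N0 \<le> m \<Longrightarrow> K + 2 \<le> m \<and> 3 \<le> 2 * s * real (m - K) \<and> 0 \<le> block_slack \<sigma> s K m"
    by (auto simp: M_def)
  have "G_set \<sigma> \<subseteq> (\<Union>N. G_from \<sigma> (max N N0))"
    by (auto simp: G_set_def G_from_def eventually_sequentially intro: max.cobounded1)
  then have "hausdorff_pre s \<delta> (G_set \<sigma>) \<le> (\<Sum>N. hausdorff_pre s \<delta> (G_from \<sigma> (max N N0)))"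
    using hausdorff_pre_mono hausdorff_pre_UN_le order_trans by blast
  also have "\<dots> = 0"
    using s \<delta> pos gap K good slack by (simp add: hausdorff_pre_G_from_eq_0)
  finally show ?thesis
    by simp
qed

theorem proposition3p2:
  fixes \<sigma> :: "nat \<Rightarrow> nat" and \<beta> :: real
  assumes pos: "\<forall>n\<ge>1. 0 < \<sigma> n"
    and incr: "\<forall>n\<ge>1. \<sigma> n < \<sigma> (Suc n)"
    and gap: "\<forall>n\<ge>1. \<sigma> (Suc n) \<ge> \<sigma> n + n"
    and lim: "(\<lambda>n. (real (\<sigma> (Suc n)) - real (\<sigma> n)) / real n) \<longlonglongrightarrow> \<beta>"
    and beta: "\<beta> \<ge> 1"
  shows "hausdorff_dim (G_set \<sigma>) \<le> ereal ((\<beta> - 1) / (2 * \<beta>))"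
proof (rule hausdorff_dim_le)
  show "0 \<le> (\<beta> - 1) / (2 * \<beta>)"
    using beta by simp
  show "(\<beta> - 1) / (2 * \<beta>) < 1/2"
    using beta by (simp add: field_simps)
next
  fix s assume s: "(\<beta> - 1) / (2 * \<beta>) < s" "s < 1/2"
  have "0 \<le> (\<beta> - 1) / (2 * \<beta>)"
    using beta by simp
  then have "0 < s"
    using s(1) by linarith
  moreover have "\<beta> - 1 < 2 * s * \<beta>"
    using beta s(1) by (simp add: field_simps)
  ultimately show "hausdorff_measure s (G_set \<sigma>) = 0"
    using pos gap lim s(2)
    by (intro hausdorff_measure_eq_0I hausdorff_pre_G_set_eq_0[where \<beta> = \<beta>]) auto
qed

end
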